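(* Let $r\ge1$, $n$ be integers and let $\sigma:\mathbb{Z}_n\to\{0,1\}$ be a temporally periodic configuration. Then either every block $[i,j]\in B(\sigma)$ has length $|[i,j]|\le r$, or every block $[i,j]\in B(\sigma)$ has length $|[i,j]|>r$.
   Context: Cells are elements of $\mathbb{Z}_n$, arithmetic mod $n$; $[a,b]$ denotes the cyclic interval $a,a+1,\dots,b$ and $|[a,b]|$ its number of cells. The majority rule with radius $r$: $\mathrm{maj}_r(\sigma)(i)=0$ if among the cells of $[i-r,i+r]$ strictly more have value $0$ than value $1$ under $\sigma$, and $=1$ otherwise. $\sigma$ is temporally periodic if $\mathrm{maj}_r(\mathrm{maj}_r(\sigma))=\sigma$. For $\beta\in\{0,1\}$, $B^\beta(\sigma)$ is the set of maximal homogeneous blocks with value $\beta$: cell intervals $[i,j]$ with $\sigma(k)=\beta$ for all $k\in[i,j]$ and $\sigma(i-1)=\sigma(j+1)=1-\beta$; $B(\sigma)=B^0(\sigma)\cup B^1(\sigma)$. *)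

theory Defs
  imports Main
begin

(* Cells are integers taken modulo n (representatives 0..n-1). A configuration
   sigma : Z_n -> {0,1} is a function int => bool, with False = 0, True = 1,
   always read at (x mod n). *)

definition cyc_interval :: "nat \<Rightarrow> int \<Rightarrow> int \<Rightarrow> int set" where
  "cyc_interval n a b = {(a + int t) mod int n | t. t \<le> nat ((b - a) mod int n)}"

definition maj :: "nat \<Rightarrow> nat \<Rightarrow> (int \<Rightarrow> bool) \<Rightarrow> int \<Rightarrow> bool" where
  "maj n r \<sigma> i =
     (\<not> (card {k \<in> {- int r .. int r}. \<not> \<sigma> ((i + k) mod int n)}
          > card {k \<in> {- int r .. int r}. \<sigma> ((i + k) mod int n)}))"

definition temporally_periodic :: "nat \<Rightarrow> nat \<Rightarrow> (int \<Rightarrow> bool) \<Rightarrow> bool" where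
  "temporally_periodic n r \<sigma> \<longleftrightarrow>
     (\<forall>i \<in> {0..<int n}. maj n r (maj n r \<sigma>) i = \<sigma> i)"

definition blocks_of :: "nat \<Rightarrow> (int \<Rightarrow> bool) \<Rightarrow> bool \<Rightarrow> (int \<times> int) set" where
  "blocks_of n \<sigma> \<beta> = {(i, j). i \<in> {0..<int n} \<and> j \<in> {0..<int n} \<and>
      (\<forall>k \<in> cyc_interval n i j. \<sigma> k = \<beta>) \<and>
      \<sigma> ((i - 1) mod int n) = (\<not> \<beta>) \<and> \<sigma> ((j + 1) mod int n) = (\<not> \<beta>)}"

definition blocks :: "nat \<Rightarrow> (int \<Rightarrow> bool) \<Rightarrow> (int \<times> int) set" where
  "blocks n \<sigma> = blocks_of n \<sigma> False \<union> blocks_of n \<sigma> True"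

end

theory Submission
  imports Defs
begin

text \<open>A monochromatic window of \<open>r + 1\<close> consecutive cells is fixed by \<open>maj\<^sub>r\<close>. Under
  temporal periodicity, lying in such a window passes from a cell \<open>x\<close> to \<open>x + 1\<close>: the only
  critical case is a window \<open>[x - r, x]\<close> of colour \<open>\<beta>\<close> followed by a cell of the other
  colour, and then a \<open>\<beta>\<close> among the next \<open>r\<close> cells would make \<open>maj\<^sub>r \<sigma>\<close> equal to \<open>\<beta>\<close> on
  \<open>[x + 1 - r, x + 1]\<close>, hence \<open>maj\<^sub>r (maj\<^sub>r \<sigma>) (x + 1) = \<beta> \<noteq> \<sigma> (x + 1)\<close>. So one block
  longer than \<open>r\<close> puts every cell into a monochromatic window. The first cell of a block
  can only lie in a window starting at it, and that window must stay inside the block, so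
  the block is longer than \<open>r\<close> as well.\<close>

lemma maj_mod: "maj n r \<rho> (x mod int n) = maj n r \<rho> x"
  unfolding maj_def by (simp add: mod_add_left_eq)

lemma maj_eq_if_majority:
  fixes S :: "int set"
  assumes S: "S \<subseteq> {- int r .. int r}" and card_S: "r < card S"
    and S_val: "\<forall>k\<in>S. \<rho> ((x + k) mod int n) = \<beta>"
  shows "maj n r \<rho> x = \<beta>"
proof -
  let ?I = "{- int r .. int r}"
  let ?A = "{k \<in> ?I. \<not> \<rho> ((x + k) mod int n)}"
  let ?B = "{k \<in> ?I. \<rho> ((x + k) mod int n)}"
  have "card ?A + card ?B = card (?A \<union> ?B)"
    by (rule card_Un_disjoint [symmetric]) (auto intro: finite_subset [of _ ?I])
  also have "?A \<union> ?B = ?I" by blast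
  finally have total: "card ?A + card ?B = 2 * r + 1" by simp
  have "S \<subseteq> (if \<beta> then ?B else ?A)" using S S_val by auto
  then have "card S \<le> card (if \<beta> then ?B else ?A)"
    by (intro card_mono) (auto intro: finite_subset [of _ ?I])
  then show ?thesis unfolding maj_def using total card_S by (cases \<beta>) auto
qed

definition mono_window :: "nat \<Rightarrow> nat \<Rightarrow> (int \<Rightarrow> bool) \<Rightarrow> int \<Rightarrow> bool \<Rightarrow> bool" where
  "mono_window n r \<sigma> a \<beta> \<longleftrightarrow> (\<forall>k \<in> {a .. a + int r}. \<sigma> (k mod int n) = \<beta>)"

definition in_mono_window :: "nat \<Rightarrow> nat \<Rightarrow> (int \<Rightarrow> bool) \<Rightarrow> int \<Rightarrow> bool" where
  "in_mono_window n r \<sigma> x \<longleftrightarrow>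
     (\<exists>a \<in> {x - int r .. x}. mono_window n r \<sigma> a (\<sigma> (x mod int n)))"

lemma maj_on_mono_window:
  assumes "mono_window n r \<sigma> a \<beta>" and "y \<in> {a .. a + int r}"
  shows "maj n r \<sigma> y = \<beta>"
proof (rule maj_eq_if_majority)
  show "{a - y .. a + int r - y} \<subseteq> {- int r .. int r}" using assms(2) by auto
  show "r < card {a - y .. a + int r - y}" by simp
  show "\<forall>k \<in> {a - y .. a + int r - y}. \<sigma> ((y + k) mod int n) = \<beta>"
    using assms(1) unfolding mono_window_def by force
qed

lemma temporally_periodic_maj_maj:
  assumes "temporally_periodic n r \<sigma>" and "n \<ge> 1"
  shows "maj n r (maj n r \<sigma>) x = \<sigma> (x mod int n)"
  using assms maj_mod[of n r "maj n r \<sigma>" x] unfolding temporally_periodic_def by simp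

lemma maj_maj_right_of_mono_window:
  assumes window: "mono_window n r \<sigma> (x - int r) \<beta>"
    and m: "m \<in> {1 .. int r}" and m_val: "\<sigma> ((x + 1 + m) mod int n) = \<beta>"
  shows "maj n r (maj n r \<sigma>) (x + 1) = \<beta>"
proof -
  have "maj n r \<sigma> (x + 1) = \<beta>"
  proof (rule maj_eq_if_majority)
    show "{- int r .. -1} \<union> {m} \<subseteq> {- int r .. int r}" using m by auto
    show "r < card ({- int r .. -1} \<union> {m})" using m by simp
    show "\<forall>k \<in> {- int r .. -1} \<union> {m}. \<sigma> ((x + 1 + k) mod int n) = \<beta>"
      using window m_val unfolding mono_window_def by (force simp: algebra_simps)
  qed
  moreover have "maj n r \<sigma> y = \<beta>" if "y \<in> {x - int r .. x}" for y
    using maj_on_mono_window[OF window] that by simp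
  ultimately have "mono_window n r (maj n r \<sigma>) (x + 1 - int r) \<beta>"
    unfolding mono_window_def maj_mod by (auto simp: le_less zle_add1_eq_le)
  then show ?thesis by (rule maj_on_mono_window) simp
qed

lemma in_mono_window_succ:
  assumes tp: "temporally_periodic n r \<sigma>" and n: "n \<ge> 1"
    and "in_mono_window n r \<sigma> x"
  shows "in_mono_window n r \<sigma> (x + 1)"
proof -
  define \<beta> where "\<beta> = \<sigma> (x mod int n)"
  obtain a where a: "a \<in> {x - int r .. x}" and window: "mono_window n r \<sigma> a \<beta>"
    using assms(3) unfolding in_mono_window_def \<beta>_def by blast
  consider "a \<noteq> x - int r" | "a = x - int r" "\<sigma> ((x + 1) mod int n) = \<beta>"
    | "a = x - int r" "\<sigma> ((x + 1) mod int n) \<noteq> \<beta>"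
    by blast
  then show ?thesis
  proof cases
    case 1
    then have "\<sigma> ((x + 1) mod int n) = \<beta>"
      using a window unfolding mono_window_def by auto
    with 1 a window show ?thesis unfolding in_mono_window_def by auto
  next
    case 2
    then have "mono_window n r \<sigma> (x + 1 - int r) \<beta>"
      using window unfolding mono_window_def by (auto simp: le_less zle_add1_eq_le)
    with 2 show ?thesis unfolding in_mono_window_def by auto
  next
    case 3
    have "mono_window n r \<sigma> (x + 1) (\<sigma> ((x + 1) mod int n))"
      unfolding mono_window_def
    proof (rule ccontr)
      assume "\<not> (\<forall>k \<in> {x + 1 .. x + 1 + int r}. \<sigma> (k mod int n) = \<sigma> ((x + 1) mod int n))"
      then obtain k where k: "k \<in> {x + 1 .. x + 1 + int r}"
        and k_val: "\<sigma> (k mod int n) \<noteq> \<sigma> ((x + 1) mod int n)"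
        by blast
      have "k \<noteq> x + 1" using k_val by blast
      then have "k - (x + 1) \<in> {1 .. int r}" using k by auto
      moreover have "\<sigma> ((x + 1 + (k - (x + 1))) mod int n) = \<beta>"
        using k_val 3 by auto
      ultimately have "maj n r (maj n r \<sigma>) (x + 1) = \<beta>"
        using maj_maj_right_of_mono_window window 3 by blast
      with 3 show False using temporally_periodic_maj_maj [OF tp n] by simp
    qed
    then show ?thesis unfolding in_mono_window_def by auto
  qed
qed

lemma in_mono_window_propagate:
  assumes tp: "temporally_periodic n r \<sigma>" and n: "n \<ge> 1"
    and "in_mono_window n r \<sigma> x" and "x \<le> y"
  shows "in_mono_window n r \<sigma> y"
proof -
  have "in_mono_window n r \<sigma> (x + int t)" for t
  proof (induction t)
    case 0
    then show ?case using assms(3) by simp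
  next
    case (Suc t)
    have "in_mono_window n r \<sigma> (x + int t + 1)" by (rule in_mono_window_succ [OF tp n Suc.IH])
    then show ?case by (simp add: ac_simps)
  qed
  from this [of "nat (y - x)"] show ?thesis using assms(4) by simp
qed

lemma mono_window_at_left_boundary:
  assumes "in_mono_window n r \<sigma> x" and "\<sigma> ((x - 1) mod int n) \<noteq> \<sigma> (x mod int n)"
  shows "mono_window n r \<sigma> x (\<sigma> (x mod int n))"
proof -
  obtain a where a: "a \<in> {x - int r .. x}" and window: "mono_window n r \<sigma> a (\<sigma> (x mod int n))"
    using assms(1) unfolding in_mono_window_def by blast
  have "a = x"
  proof (rule ccontr)
    assume "a \<noteq> x"
    then have "x - 1 \<in> {a .. a + int r}" using a by auto
    then show False using window assms(2) unfolding mono_window_def by blast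
  qed
  with window show ?thesis by simp
qed

lemma card_cyc_interval:
  assumes "n \<ge> 1"
  shows "card (cyc_interval n a b) = nat ((b - a) mod int n) + 1"
proof -
  let ?M = "nat ((b - a) mod int n)"
  have M: "?M < n" using assms by (simp add: nat_less_iff)
  have "cyc_interval n a b = (\<lambda>t. (a + int t) mod int n) ` {..?M}"
    unfolding cyc_interval_def by auto
  moreover have "inj_on (\<lambda>t. (a + int t) mod int n) {..?M}"
  proof (rule inj_on_inverseI [where g = "\<lambda>x. nat ((x - a) mod int n)"])
    fix t assume "t \<in> {..?M}"
    with M show "nat (((a + int t) mod int n - a) mod int n) = t"
      by (simp add: mod_diff_left_eq)
  qed
  ultimately show ?thesis by (simp add: card_image)
qed

lemma blocks_of_cell:
  assumes "(i, j) \<in> blocks_of n \<sigma> \<beta>" and "n \<ge> 1" and "t < card (cyc_interval n i j)"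
  shows "\<sigma> ((i + int t) mod int n) = \<beta>"
proof -
  have "t \<le> nat ((j - i) mod int n)" using assms(3) card_cyc_interval [OF assms(2)] by simp
  then have "(i + int t) mod int n \<in> cyc_interval n i j" unfolding cyc_interval_def by blast
  then show ?thesis using assms(1) unfolding blocks_of_def by blast
qed

lemma blocks_of_right_neighbour:
  assumes "(i, j) \<in> blocks_of n \<sigma> \<beta>" and "n \<ge> 1"
  shows "\<sigma> ((i + int (card (cyc_interval n i j))) mod int n) = (\<not> \<beta>)"
proof -
  have "(i + int (card (cyc_interval n i j))) mod int n = (i + 1 + (j - i) mod int n) mod int n"
    using assms(2) by (simp add: card_cyc_interval ac_simps)
  also have "\<dots> = (i + 1 + (j - i)) mod int n" by (rule mod_add_right_eq)
  also have "\<dots> = (j + 1) mod int n" by (simp add: add.commute)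
  finally show ?thesis using assms(1) unfolding blocks_of_def by simp
qed

lemma in_mono_window_of_long_block:
  assumes block: "(i, j) \<in> blocks_of n \<sigma> \<beta>" and n: "n \<ge> 1"
    and long: "r < card (cyc_interval n i j)"
  shows "in_mono_window n r \<sigma> i"
proof -
  have cell: "\<sigma> ((i + int t) mod int n) = \<beta>" if "t \<le> r" for t
    using blocks_of_cell [OF block n] long that by simp
  have "mono_window n r \<sigma> i \<beta>"
    unfolding mono_window_def
  proof
    fix k assume "k \<in> {i .. i + int r}"
    then show "\<sigma> (k mod int n) = \<beta>" using cell [of "nat (k - i)"] by auto
  qed
  moreover have "\<sigma> (i mod int n) = \<beta>" using cell [of 0] by simp
  ultimately show ?thesis unfolding in_mono_window_def by auto
qed

lemma long_block_if_in_mono_window: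
  assumes block: "(i, j) \<in> blocks_of n \<sigma> \<beta>" and n: "n \<ge> 1"
    and x: "x mod int n = i mod int n" and good: "in_mono_window n r \<sigma> x"
  shows "r < card (cyc_interval n i j)"
proof (rule ccontr)
  assume short: "\<not> r < card (cyc_interval n i j)"
  define c where "c = card (cyc_interval n i j)"
  have "\<sigma> (x mod int n) = \<beta>"
    using blocks_of_cell [OF block n, of 0] card_cyc_interval [OF n] x by simp
  moreover have "\<sigma> ((x - 1) mod int n) = (\<not> \<beta>)"
  proof -
    have "(x - 1) mod int n = (x mod int n - 1) mod int n" by (simp add: mod_diff_left_eq)
    also have "\<dots> = (i - 1) mod int n" by (simp add: x mod_diff_left_eq)
    finally show ?thesis using block unfolding blocks_of_def by simp
  qed
  ultimately have "mono_window n r \<sigma> x \<beta>"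
    using mono_window_at_left_boundary [OF good] by simp
  moreover have "x + int c \<in> {x .. x + int r}" using short c_def by simp
  ultimately have "\<sigma> ((x + int c) mod int n) = \<beta>" unfolding mono_window_def by blast
  moreover have "(x + int c) mod int n = (i + int c) mod int n"
  proof -
    have "(x + int c) mod int n = (x mod int n + int c) mod int n" by (simp add: mod_add_left_eq)
    also have "\<dots> = (i + int c) mod int n" by (simp add: x mod_add_left_eq)
    finally show ?thesis .
  qed
  ultimately show False using blocks_of_right_neighbour [OF block n] c_def by simp
qed

theorem claim6:
  fixes n r :: nat and \<sigma> :: "int \<Rightarrow> bool"
  assumes "r \<ge> 1" and "n \<ge> 1"
    and "temporally_periodic n r \<sigma>"
  shows "(\<forall>(i, j) \<in> blocks n \<sigma>. card (cyc_interval n i j) \<le> r)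
       \<or> (\<forall>(i, j) \<in> blocks n \<sigma>. card (cyc_interval n i j) > r)"
proof (rule ccontr)
  assume "\<not> ?thesis"
  then obtain i j \<beta> i' j' \<beta>' where
    long: "(i, j) \<in> blocks_of n \<sigma> \<beta>" "r < card (cyc_interval n i j)" and
    short: "(i', j') \<in> blocks_of n \<sigma> \<beta>'" "card (cyc_interval n i' j') \<le> r"
    unfolding blocks_def by fastforce
  have "in_mono_window n r \<sigma> i"
    using in_mono_window_of_long_block long assms(2) by blast
  moreover have "i \<le> i' + int n" using long(1) short(1) unfolding blocks_of_def by simp
  ultimately have "in_mono_window n r \<sigma> (i' + int n)"
    using in_mono_window_propagate [OF assms(3,2)] by blast
  moreover have "(i' + int n) mod int n = i' mod int n" by simp
  ultimately have "r < card (cyc_interval n i' j')"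
    using long_block_if_in_mono_window [OF short(1) assms(2)] by blast
  with short(2) show False by simp
qed

end
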